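(* For all $n\geq1$ and all formulas $\phi,\chi_1,\dots,\chi_n\in\mathcal{L}(\nabla,\bullet)$, $$\vdash_{\mathbf{K}^{\nabla\bullet}}\Delta\Big(\bigwedge_{k=1}^n\chi_k\to\phi\Big)\land\bigwedge_{k=1}^n\Delta\chi_k\land\bigwedge_{k=1}^n\circ(\phi\to\chi_k)\to\phi\vee\Delta\phi.$$
   Context: $\mathcal{L}(\nabla,\bullet)$: $\phi::=p\mid\neg\phi\mid\phi\land\phi\mid\nabla\phi\mid\bullet\phi$ over a nonempty set of propositional variables; $\Delta\phi:=\neg\nabla\phi$, $\circ\phi:=\neg\bullet\phi$. The Hilbert system $\mathbf{K}^{\nabla\bullet}$ has axioms: A0 all instances of propositional tautologies; A1 $\bullet\phi\to\phi$; A2 $\nabla\phi\leftrightarrow\nabla\neg\phi$; A3 $\bullet(\psi\to\phi)\land\phi\to\bullet\phi$; A4 $\nabla(\phi\land\psi)\to\nabla\phi\vee\nabla\psi$; A5 $\bullet(\phi\land\psi)\to\bullet\phi\vee\bullet\psi$; A6 $\nabla\phi\to\bullet\phi\vee\bullet\neg\phi$; A7 $\bullet(\phi\to\psi)\land\bullet(\neg\phi\to\chi)\to\nabla\phi$; and rules: R1 from $\phi$ infer $\Delta\phi$; R2 from $\phi$ infer $\circ\phi$; R3 from $\phi\leftrightarrow\psi$ infer $\Delta\phi\leftrightarrow\Delta\psi$; R4 from $\phi\leftrightarrow\psi$ infer $\circ\phi\leftrightarrow\circ\psi$; MP. *)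

theory Defs
  imports Main
begin

text \<open>Language L(nabla, bullet) over propositional variables of type 'p
  (every HOL type is nonempty, so the set of variables is nonempty).\<close>

datatype 'p form =
    Var 'p
  | Neg "'p form"
  | Conj "'p form" "'p form"
  | Nab "'p form"
  | Bul "'p form"

definition Disj :: "'p form \<Rightarrow> 'p form \<Rightarrow> 'p form" where
  "Disj a b = Neg (Conj (Neg a) (Neg b))"

definition Imp :: "'p form \<Rightarrow> 'p form \<Rightarrow> 'p form" where
  "Imp a b = Neg (Conj a (Neg b))"

definition Iff :: "'p form \<Rightarrow> 'p form \<Rightarrow> 'p form" where
  "Iff a b = Conj (Imp a b) (Imp b a)"

definition Delta :: "'p form \<Rightarrow> 'p form" where
  "Delta a = Neg (Nab a)"

definition Circ :: "'p form \<Rightarrow> 'p form" where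
  "Circ a = Neg (Bul a)"

fun BigConj :: "'p form list \<Rightarrow> 'p form" where
  "BigConj [] = Neg (Conj (Var undefined) (Neg (Var undefined)))"
| "BigConj [a] = a"
| "BigConj (a # b # xs) = Conj a (BigConj (b # xs))"

text \<open>Propositional evaluation: modal formulas are treated as atoms.\<close>
fun peval :: "('p form \<Rightarrow> bool) \<Rightarrow> 'p form \<Rightarrow> bool" where
  "peval V (Var p) = V (Var p)"
| "peval V (Neg a) = (\<not> peval V a)"
| "peval V (Conj a b) = (peval V a \<and> peval V b)"
| "peval V (Nab a) = V (Nab a)"
| "peval V (Bul a) = V (Bul a)"

definition taut :: "'p form \<Rightarrow> bool" where
  "taut a = (\<forall>V. peval V a)"

inductive deriv :: "'p form \<Rightarrow> bool" where
  A0: "taut a \<Longrightarrow> deriv a"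
| A1: "deriv (Imp (Bul a) a)"
| A2: "deriv (Iff (Nab a) (Nab (Neg a)))"
| A3: "deriv (Imp (Conj (Bul (Imp b a)) a) (Bul a))"
| A4: "deriv (Imp (Nab (Conj a b)) (Disj (Nab a) (Nab b)))"
| A5: "deriv (Imp (Bul (Conj a b)) (Disj (Bul a) (Bul b)))"
| A6: "deriv (Imp (Nab a) (Disj (Bul a) (Bul (Neg a))))"
| A7: "deriv (Imp (Conj (Bul (Imp a b)) (Bul (Imp (Neg a) c))) (Nab a))"
| R1: "deriv a \<Longrightarrow> deriv (Delta a)"
| R2: "deriv a \<Longrightarrow> deriv (Circ a)"
| R3: "deriv (Iff a b) \<Longrightarrow> deriv (Iff (Delta a) (Delta b))"
| R4: "deriv (Iff a b) \<Longrightarrow> deriv (Iff (Circ a) (Circ b))"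
| MP: "deriv (Imp a b) \<Longrightarrow> deriv a \<Longrightarrow> deriv b"

end

theory Submission
  imports Defs
begin

text \<open>Write \<open>X\<close> for the conjunction of the \<open>\<chi>\<^sub>k\<close>. Since \<open>\<Delta>\<close> and \<open>\<circ>\<close> are closed under
  conjunction (axioms A4, A5), the hypotheses give \<open>\<Delta>X\<close> and \<open>\<circ>(\<phi> \<rightarrow> X)\<close>; together with
  \<open>\<Delta>(X \<rightarrow> \<phi>)\<close> this yields \<open>\<Delta>(X \<and> \<phi>)\<close>, hence \<open>\<Delta>\<not>(X \<and> \<phi>)\<close> by A2. If \<open>\<phi>\<close> fails, then
  \<open>\<phi> \<rightarrow> X\<close> is true, and a true formula carrying \<open>\<circ>\<close> carries \<open>\<Delta>\<close> (A1, A6). As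
  \<open>\<not>(X \<and> \<phi>) \<and> (\<phi> \<rightarrow> X)\<close> is equivalent to \<open>\<not>\<phi>\<close>, we get \<open>\<Delta>\<not>\<phi>\<close>, i.e. \<open>\<Delta>\<phi>\<close>.\<close>

lemmas form_abbrev_defs = Imp_def Disj_def Iff_def Delta_def Circ_def

lemma deriv_foldr_Imp: "deriv (foldr Imp as c) \<Longrightarrow> \<forall>a\<in>set as. deriv a \<Longrightarrow> deriv c"
  by (induction as) (auto intro: MP)

lemma deriv_taut_consequence: "\<forall>a\<in>set as. deriv a \<Longrightarrow> taut (foldr Imp as c) \<Longrightarrow> deriv c"
  using deriv_foldr_Imp A0 by blast

lemma Delta_Neg: "deriv (Iff (Delta a) (Delta (Neg a)))"
  by (rule deriv_taut_consequence[where as = "[Iff (Nab a) (Nab (Neg a))]"])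
     (simp add: A2, auto simp: taut_def form_abbrev_defs)

lemma Delta_Conj_equiv:
  assumes "taut (Iff (Conj a b) c)"
  shows "deriv (Imp (Conj (Delta a) (Delta b)) (Delta c))"
proof -
  have cong: "deriv (Iff (Delta (Conj a b)) (Delta c))"
    using assms by (intro R3 A0)
  show ?thesis
    by (rule deriv_taut_consequence[where as = "[Iff (Delta (Conj a b)) (Delta c),
        Imp (Nab (Conj a b)) (Disj (Nab a) (Nab b))]"])
       (simp add: cong A4, auto simp: taut_def form_abbrev_defs)
qed

lemma Circ_Conj_equiv:
  assumes "taut (Iff (Conj a b) c)"
  shows "deriv (Imp (Conj (Circ a) (Circ b)) (Circ c))"
proof -
  have cong: "deriv (Iff (Circ (Conj a b)) (Circ c))"
    using assms by (intro R4 A0)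
  show ?thesis
    by (rule deriv_taut_consequence[where as = "[Iff (Circ (Conj a b)) (Circ c),
        Imp (Bul (Conj a b)) (Disj (Bul a) (Bul b))]"])
       (simp add: cong A5, auto simp: taut_def form_abbrev_defs)
qed

lemma Delta_if_Circ: "deriv (Imp (Conj a (Circ a)) (Delta a))"
  by (rule deriv_taut_consequence[where as = "[Imp (Nab a) (Disj (Bul a) (Bul (Neg a))),
      Imp (Bul (Neg a)) (Neg a)]"])
     (simp add: A6 A1, auto simp: taut_def form_abbrev_defs)

lemma Delta_BigConj: "xs \<noteq> [] \<Longrightarrow> deriv (Imp (BigConj (map Delta xs)) (Delta (BigConj xs)))"
proof (induction xs rule: BigConj.induct)
  case (2 a)
  show ?case
    by (intro A0) (simp add: taut_def form_abbrev_defs)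
next
  case (3 a b xs)
  let ?B = "BigConj (b # xs)" and ?DB = "BigConj (map Delta (b # xs))"
  have IH: "deriv (Imp ?DB (Delta ?B))"
    using 3 by simp
  have step: "deriv (Imp (Conj (Delta a) (Delta ?B)) (Delta (Conj a ?B)))"
    by (rule Delta_Conj_equiv) (simp add: taut_def form_abbrev_defs)
  show ?case
    by (rule deriv_taut_consequence[where as = "[Imp ?DB (Delta ?B),
        Imp (Conj (Delta a) (Delta ?B)) (Delta (Conj a ?B))]"])
       (simp only: IH step list.set ball_simps simp_thms, auto simp: taut_def Imp_def)
qed simp

lemma Circ_Imp_BigConj:
  "xs \<noteq> [] \<Longrightarrow>
    deriv (Imp (BigConj (map (\<lambda>c. Circ (Imp p c)) xs)) (Circ (Imp p (BigConj xs))))"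
proof (induction xs rule: BigConj.induct)
  case (2 a)
  show ?case
    by (intro A0) (simp add: taut_def form_abbrev_defs)
next
  case (3 a b xs)
  let ?B = "BigConj (b # xs)" and ?CB = "BigConj (map (\<lambda>c. Circ (Imp p c)) (b # xs))"
  have IH: "deriv (Imp ?CB (Circ (Imp p ?B)))"
    using 3 by simp
  have step: "deriv (Imp (Conj (Circ (Imp p a)) (Circ (Imp p ?B))) (Circ (Imp p (Conj a ?B))))"
    by (rule Circ_Conj_equiv) (auto simp: taut_def form_abbrev_defs)
  show ?case
    by (rule deriv_taut_consequence[where as = "[Imp ?CB (Circ (Imp p ?B)),
        Imp (Conj (Circ (Imp p a)) (Circ (Imp p ?B))) (Circ (Imp p (Conj a ?B)))]"])
       (simp only: IH step list.set ball_simps simp_thms, auto simp: taut_def Imp_def)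
qed simp

theorem proposition7:
  fixes phi :: "'p form" and chis :: "'p form list"
  assumes "chis \<noteq> []"
  shows "deriv (Imp
           (Conj (Delta (Imp (BigConj chis) phi))
             (Conj (BigConj (map Delta chis))
                   (BigConj (map (\<lambda>chi. Circ (Imp phi chi)) chis))))
           (Disj phi (Delta phi)))"
proof -
  define X where "X = BigConj chis"
  define Ds where "Ds = BigConj (map Delta chis)"
  define Cs where "Cs = BigConj (map (\<lambda>chi. Circ (Imp phi chi)) chis)"
  have Delta_X: "deriv (Imp Ds (Delta X))"
    unfolding Ds_def X_def by (rule Delta_BigConj[OF assms])
  have Circ_imp_X: "deriv (Imp Cs (Circ (Imp phi X)))"
    unfolding Cs_def X_def by (rule Circ_Imp_BigConj[OF assms])
  have Delta_X_and_phi: "deriv (Imp (Conj (Delta X) (Delta (Imp X phi))) (Delta (Conj X phi)))"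
    by (rule Delta_Conj_equiv) (auto simp: taut_def form_abbrev_defs)
  have Delta_not_phi:
    "deriv (Imp (Conj (Delta (Neg (Conj X phi))) (Delta (Imp phi X))) (Delta (Neg phi)))"
    by (rule Delta_Conj_equiv) (auto simp: taut_def form_abbrev_defs)
  have "deriv (Imp (Conj (Delta (Imp X phi)) (Conj Ds Cs)) (Disj phi (Delta phi)))"
    by (rule deriv_taut_consequence[where as = "[Imp Ds (Delta X), Imp Cs (Circ (Imp phi X)),
        Imp (Conj (Delta X) (Delta (Imp X phi))) (Delta (Conj X phi)),
        Iff (Delta (Conj X phi)) (Delta (Neg (Conj X phi))),
        Imp (Conj (Imp phi X) (Circ (Imp phi X))) (Delta (Imp phi X)),
        Imp (Conj (Delta (Neg (Conj X phi))) (Delta (Imp phi X))) (Delta (Neg phi)),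
        Iff (Delta phi) (Delta (Neg phi))]"])
       (simp add: Delta_X Circ_imp_X Delta_X_and_phi Delta_Neg Delta_if_Circ Delta_not_phi,
        auto simp: taut_def form_abbrev_defs)
  then show ?thesis
    unfolding X_def Ds_def Cs_def .
qed

end
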